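(* There is an absolute constant $C>0$ such that the following holds. Let $0<\varepsilon\le 1$ and let $S$ and $T$ be configurations of $n\ge 2$ points each whose smallest enclosing discs have the same center, such that any two distinct points of $S$, and any two distinct points of $T$, are at distance at least $2+\varepsilon$. Then for every direction $\delta$ there exists a translation $\vec v=\lambda\delta$ with $\lambda\ge 0$ such that the unlabeled problem from $S$ to $T+\vec v$ is feasible, $|\vec v|\le C\,(r(S)+r(T))/\sqrt{\varepsilon}$, and $r(S\cup(T+\vec v))\le C\,(r(S)+r(T))/\sqrt{\varepsilon}$.
   Context: For $p\in\mathbb R^2$, $D(p)$ is the open unit disc centered at $p$. $r(P)$ is the radius of the smallest closed disc containing the point set $P$. The unlabeled problem from $S$ to $T'$ is feasible if there exist a bijection $M:S\to T'$ and an ordering $s_1,\dots,s_n$ of $S$ such that for each $i$ the region $\mathrm{conv}(D(s_i)\cup D(M(s_i)))$ swept by translating $D(s_i)$ straight to $M(s_i)$ is disjoint from $D(s_j)$ for all $j>i$ and from $D(M(s_j))$ for all $j<i$. *)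

theory Defs
  imports "HOL-Analysis.Analysis"
begin

type_synonym pt = "real ^ 2"

definition udisc :: "pt \<Rightarrow> pt set" where
  "udisc p = ball p 1"

definition enc_radius :: "pt set \<Rightarrow> real" where
  "enc_radius P = Inf {r. \<exists>c. P \<subseteq> cball c r}"

definition enc_center :: "pt set \<Rightarrow> pt \<Rightarrow> bool" where
  "enc_center P c \<longleftrightarrow> P \<subseteq> cball c (enc_radius P)"

definition unlabeled_feasible :: "pt set \<Rightarrow> pt set \<Rightarrow> bool" where
  "unlabeled_feasible S T' \<longleftrightarrow>
     (\<exists>M ss. bij_betw M S T' \<and> distinct ss \<and> set ss = S \<and>
        (\<forall>i < length ss.
           (\<forall>j. i < j \<and> j < length ss \<longrightarrow>
              convex hull (udisc (ss ! i) \<union> udisc (M (ss ! i))) \<inter> udisc (ss ! j) = {}) \<and>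
           (\<forall>j < i.
              convex hull (udisc (ss ! i) \<union> udisc (M (ss ! i))) \<inter> udisc (M (ss ! j)) = {})))"

end

theory Submission
  imports Defs
begin

text \<open>Sort S and T by decreasing projection onto \<delta>, match them in this order, and translate T
by \<lambda>\<delta> with \<lambda> = R + 2R/\<surd>\<epsilon>, where R = r(S) + r(T) bounds every distance between a point of S
and a point of T. Every displacement d = \<lambda>\<delta> + w with |w| \<le> R then deviates from \<delta> by an
angle whose sine is at most \<surd>\<epsilon>/2. Moving the discs in the sorted order, a disc still waiting
lies behind the moving centre with respect to \<delta>, and a parked disc lies ahead of the moving
disc's target. So the gap vector u between the centres, of length at least 2 + \<epsilon>, either
satisfies \<langle>u, d\<rangle> \<le> 0 or makes an angle with d whose cosine is at most \<surd>\<epsilon>/2; in both cases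
its distance to the ray spanned by d is at least (2 + \<epsilon>)\<surd>(1 - \<epsilon>/4) \<ge> 2.\<close>

lemma norm_diff_scaleR_sq:
  fixes u d :: "'a::real_inner"
  shows "(norm (u - \<mu> *\<^sub>R d))\<^sup>2 = (norm u)\<^sup>2 - 2 * \<mu> * inner u d + \<mu>\<^sup>2 * (norm d)\<^sup>2"
  unfolding power2_norm_eq_inner
  by (simp add: inner_diff_left inner_diff_right inner_commute algebra_simps power2_eq_square)

lemma norm_diff_scaleR_sq_ge:
  fixes u d :: "'a::real_inner"
  assumes "d \<noteq> 0"
  shows "(norm u)\<^sup>2 - (inner u d)\<^sup>2 / (norm d)\<^sup>2 \<le> (norm (u - \<mu> *\<^sub>R d))\<^sup>2"
proof -
  have D: "(norm d)\<^sup>2 > 0" using assms by simp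
  have "(norm d)\<^sup>2 * (norm (u - \<mu> *\<^sub>R d))\<^sup>2
      = (\<mu> * (norm d)\<^sup>2 - inner u d)\<^sup>2 + ((norm d)\<^sup>2 * (norm u)\<^sup>2 - (inner u d)\<^sup>2)"
    unfolding norm_diff_scaleR_sq by (simp add: algebra_simps power2_eq_square)
  hence "(norm d)\<^sup>2 * (norm u)\<^sup>2 - (inner u d)\<^sup>2 \<le> (norm d)\<^sup>2 * (norm (u - \<mu> *\<^sub>R d))\<^sup>2"
    by (smt (verit) zero_le_power2)
  thus ?thesis using D by (simp add: field_simps)
qed

lemma two_plus_sq_ge:
  fixes e :: real
  assumes "0 \<le> e" "e \<le> 1"
  shows "4 \<le> (2 + e)\<^sup>2 * (1 - e / 4)"
proof -
  have "(2 + e)\<^sup>2 * (1 - e / 4) = 4 + e * (3 - e\<^sup>2 / 4)" by (simp add: power2_eq_square algebra_simps)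
  moreover have "e\<^sup>2 \<le> 1" using assms by (simp add: power_le_one)
  ultimately show ?thesis using assms by simp
qed

lemma norm_diff_scaleR_ge_two:
  fixes u d :: "'a::real_inner"
  assumes R: "0 < R" and e: "0 < e" "e \<le> 1" and u: "2 + e \<le> norm u"
    and ud: "inner u d \<le> norm u * R" and d: "2 * R / sqrt e \<le> norm d" and \<mu>: "0 \<le> \<mu>"
  shows "2 \<le> norm (u - \<mu> *\<^sub>R d)"
proof -
  have pos: "0 < 2 * R / sqrt e" using R e by simp
  hence "d \<noteq> 0" using d by auto
  have "(2 * R / sqrt e)\<^sup>2 \<le> (norm d)\<^sup>2" using d pos by (intro power_mono) auto
  hence d2: "4 * R\<^sup>2 / e \<le> (norm d)\<^sup>2" using e by (simp add: power_divide power_mult_distrib)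
  have u2: "(2 + e)\<^sup>2 \<le> (norm u)\<^sup>2" using u e by (intro power_mono) auto
  have "(2::real)\<^sup>2 \<le> (norm (u - \<mu> *\<^sub>R d))\<^sup>2"
  proof (cases "inner u d \<le> 0")
    case True
    have "0 \<le> - 2 * \<mu> * inner u d" using True \<mu> by (simp add: mult_nonneg_nonpos)
    moreover have "0 \<le> \<mu>\<^sup>2 * (norm d)\<^sup>2" by simp
    moreover have "(2::real)\<^sup>2 \<le> (2 + e)\<^sup>2" using e by (intro power_mono) auto
    ultimately show ?thesis using u2 unfolding norm_diff_scaleR_sq by linarith
  next
    case False
    have "(inner u d)\<^sup>2 \<le> (norm u * R)\<^sup>2"
      using ud False by (intro power_mono) auto
    also have "\<dots> \<le> (norm u)\<^sup>2 * (e / 4 * (norm d)\<^sup>2)"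
      unfolding power_mult_distrib using d2 e by (intro mult_left_mono) (auto simp: field_simps)
    finally have "(inner u d)\<^sup>2 / (norm d)\<^sup>2 \<le> (norm u)\<^sup>2 * (e / 4)"
      using \<open>d \<noteq> 0\<close> by (simp add: field_simps)
    hence "(norm u)\<^sup>2 * (1 - e / 4) \<le> (norm (u - \<mu> *\<^sub>R d))\<^sup>2"
      using norm_diff_scaleR_sq_ge[OF \<open>d \<noteq> 0\<close>, of u \<mu>] by (simp add: algebra_simps)
    moreover have "(2 + e)\<^sup>2 * (1 - e / 4) \<le> (norm u)\<^sup>2 * (1 - e / 4)"
      using u2 e by (intro mult_right_mono) auto
    ultimately have "4 \<le> (norm (u - \<mu> *\<^sub>R d))\<^sup>2" using two_plus_sq_ge[of e] e by linarith
    thus ?thesis by simp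
  qed
  thus ?thesis by (rule power2_le_imp_le) simp
qed

lemma segment_far_from_point:
  fixes u w \<delta> :: "'a::real_inner"
  assumes \<delta>: "norm \<delta> = 1" and w: "norm w \<le> R" and R: "R > 0" and e: "0 < e" "e \<le> 1"
    and u: "2 + e \<le> norm u" and u\<delta>: "inner u \<delta> \<le> 0"
    and lam: "R + 2 * R / sqrt e \<le> lam" and \<mu>: "0 \<le> \<mu>"
  shows "2 \<le> norm (u - \<mu> *\<^sub>R (lam *\<^sub>R \<delta> + w))"
proof (rule norm_diff_scaleR_ge_two[OF R e u _ _ \<mu>])
  have "0 < 2 * R / sqrt e" using R e by simp
  hence lam0: "0 \<le> lam" using lam R by linarith
  have "lam * inner u \<delta> \<le> 0" using lam0 u\<delta> by (simp add: mult_nonneg_nonpos)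
  moreover have "inner u w \<le> norm u * R"
    using norm_cauchy_schwarz[of u w] mult_left_mono[OF w norm_ge_zero[of u]] by linarith
  ultimately show "inner u (lam *\<^sub>R \<delta> + w) \<le> norm u * R" by (simp add: inner_add_right)
  have "lam \<le> norm (lam *\<^sub>R \<delta> + w) + R"
    using norm_triangle_ineq4[of "lam *\<^sub>R \<delta> + w" w] w \<delta> lam0 by simp
  thus "2 * R / sqrt e \<le> norm (lam *\<^sub>R \<delta> + w)" using lam by simp
qed

lemma convex_hull_balls_disjoint:
  fixes a b p :: "'a::real_normed_vector"
  assumes "\<And>\<mu>. 0 \<le> \<mu> \<Longrightarrow> \<mu> \<le> 1 \<Longrightarrow> 2 * r \<le> dist p (a + \<mu> *\<^sub>R (b - a))"
  shows "convex hull (ball a r \<union> ball b r) \<inter> ball p r = {}"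
proof -
  define K where "K = (\<Union>x\<in>closed_segment a b. \<Union>y\<in>ball 0 r. {x + y})"
  have "ball x r \<subseteq> K" if "x \<in> closed_segment a b" for x
  proof
    fix z assume "z \<in> ball x r"
    hence "z - x \<in> ball 0 r" by (simp add: dist_norm norm_minus_commute)
    thus "z \<in> K" unfolding K_def using that by force
  qed
  hence "ball a r \<union> ball b r \<subseteq> K" by auto
  moreover have "convex K" unfolding K_def by (intro convex_sums) auto
  ultimately have "convex hull (ball a r \<union> ball b r) \<subseteq> K" by (rule hull_minimal)
  moreover have "K \<inter> ball p r = {}"
  proof (rule ccontr)
    assume "K \<inter> ball p r \<noteq> {}"
    then obtain x y where x: "x \<in> closed_segment a b" and y: "norm y < r" and xy: "dist p (x + y) < r"
      unfolding K_def by auto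
    obtain \<mu> where \<mu>: "0 \<le> \<mu>" "\<mu> \<le> 1" "x = a + \<mu> *\<^sub>R (b - a)"
      using x by (auto simp: in_segment algebra_simps)
    have "dist p x \<le> dist p (x + y) + norm y"
      by (metis add_diff_cancel_left' dist_commute dist_norm dist_triangle2)
    moreover have "2 * r \<le> dist p x" using assms[OF \<mu>(1,2)] \<mu>(3) by simp
    ultimately show False using y xy by linarith
  qed
  ultimately show ?thesis by blast
qed

lemma sorted_list_of_finite_set_by_key:
  fixes f :: "'a \<Rightarrow> 'b::linorder"
  assumes "finite A"
  obtains xs where "distinct xs" "set xs = A"
    "\<And>i j. i \<le> j \<Longrightarrow> j < length xs \<Longrightarrow> f (xs ! i) \<le> f (xs ! j)"
proof -
  obtain ys where ys: "set ys = A" "distinct ys" using finite_distinct_list[OF assms] by blast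
  define xs where "xs = sort_key f ys"
  have "sorted (map f xs)" unfolding xs_def by simp
  hence "f (xs ! i) \<le> f (xs ! j)" if "i \<le> j" "j < length xs" for i j
    using sorted_nth_mono[of "map f xs" i j] that by simp
  moreover have "distinct xs" "set xs = A" using ys unfolding xs_def by auto
  ultimately show thesis using that by blast
qed

lemma unlabeled_feasible_if_segments_clear:
  fixes ss tt :: "pt list"
  assumes ss: "distinct ss" and tt: "distinct tt" and len: "length ss = length tt"
    and ahead: "\<And>i j \<mu>. i < j \<Longrightarrow> j < length ss \<Longrightarrow> 0 \<le> \<mu> \<Longrightarrow> \<mu> \<le> 1 \<Longrightarrow>
      2 \<le> dist (ss ! j) (ss ! i + \<mu> *\<^sub>R (tt ! i - ss ! i))"
    and behind: "\<And>i j \<mu>. j < i \<Longrightarrow> i < length ss \<Longrightarrow> 0 \<le> \<mu> \<Longrightarrow> \<mu> \<le> 1 \<Longrightarrow>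
      2 \<le> dist (tt ! j) (ss ! i + \<mu> *\<^sub>R (tt ! i - ss ! i))"
  shows "unlabeled_feasible (set ss) (set tt)"
proof -
  define I where "I = {..<length ss}"
  have bs: "bij_betw (nth ss) I (set ss)" and bt: "bij_betw (nth tt) I (set tt)"
    using bij_betw_nth[OF ss] bij_betw_nth[OF tt] len unfolding I_def by auto
  define M where "M = nth tt \<circ> inv_into I (nth ss)"
  have "bij_betw M (set ss) (set tt)"
    unfolding M_def using bij_betw_inv_into[OF bs] bt by (rule bij_betw_trans)
  moreover have M: "M (ss ! i) = tt ! i" if "i < length ss" for i
    using bij_betw_imp_inj_on[OF bs] that unfolding M_def I_def by simp
  moreover have "convex hull (udisc (ss ! i) \<union> udisc (M (ss ! i))) \<inter> udisc (ss ! j) = {}"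
    if "i < j" "j < length ss" for i j
    unfolding udisc_def M[OF less_trans[OF that]]
    using ahead[OF that] by (intro convex_hull_balls_disjoint) simp
  moreover have "convex hull (udisc (ss ! i) \<union> udisc (M (ss ! i))) \<inter> udisc (M (ss ! j)) = {}"
    if "j < i" "i < length ss" for i j
    unfolding udisc_def M[OF that(2)] M[OF less_trans[OF that]]
    using behind[OF that] by (intro convex_hull_balls_disjoint) simp
  ultimately show ?thesis unfolding unlabeled_feasible_def using ss by blast
qed

lemma dist_le_enc_radius_add:
  assumes "enc_center S c" "enc_center T c" "s \<in> S" "t \<in> T"
  shows "dist s t \<le> enc_radius S + enc_radius T"
proof -
  have "dist c s \<le> enc_radius S" "dist c t \<le> enc_radius T"
    using assms unfolding enc_center_def by auto
  thus ?thesis using dist_triangle3[of s t c] by linarith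
qed

lemma enc_radius_le:
  assumes "p \<in> P" "P \<subseteq> cball c r"
  shows "enc_radius P \<le> r"
  unfolding enc_radius_def
proof (rule cInf_lower)
  show "r \<in> {r. \<exists>c. P \<subseteq> cball c r}" using assms(2) by blast
  show "bdd_below {r. \<exists>c. P \<subseteq> cball c r}"
    using assms(1) by (intro bdd_belowI[of _ 0]) (auto dest: order_trans[OF zero_le_dist] simp: subset_iff)
qed

lemma enc_radius_nonneg:
  assumes "enc_center P c" "p \<in> P"
  shows "0 \<le> enc_radius P"
  using dist_le_enc_radius_add[OF assms(1,1,2,2)] by simp

lemma enc_radius_union_translate_le:
  assumes cS: "enc_center S c" and cT: "enc_center T c" and "s \<in> S" "t \<in> T"
  shows "enc_radius (S \<union> (\<lambda>x. x + v) ` T) \<le> enc_radius S + enc_radius T + norm v"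
proof (rule enc_radius_le)
  show "s \<in> S \<union> (\<lambda>x. x + v) ` T" using assms(3) by simp
  have "dist c x \<le> enc_radius S + enc_radius T + norm v" if "x \<in> S" for x
    using cS that enc_radius_nonneg[OF cT assms(4)] norm_ge_zero[of v]
    unfolding enc_center_def by (smt (verit) mem_cball subsetD)
  moreover have "dist c (x + v) \<le> enc_radius S + enc_radius T + norm v" if "x \<in> T" for x
    using cT that dist_triangle[of c "x + v" x] enc_radius_nonneg[OF cS assms(3)]
    unfolding enc_center_def by (auto simp: dist_norm)
  ultimately show "S \<union> (\<lambda>x. x + v) ` T \<subseteq> cball c (enc_radius S + enc_radius T + norm v)"
    by auto
qed

lemma unlabeled_feasible_translate:
  fixes S T :: "pt set" and \<delta> :: pt
  assumes fin: "finite S" "finite T" and card: "card S = card T"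
    and sepS: "\<And>p q. p \<in> S \<Longrightarrow> q \<in> S \<Longrightarrow> p \<noteq> q \<Longrightarrow> 2 + e \<le> dist p q"
    and sepT: "\<And>p q. p \<in> T \<Longrightarrow> q \<in> T \<Longrightarrow> p \<noteq> q \<Longrightarrow> 2 + e \<le> dist p q"
    and close: "\<And>s t. s \<in> S \<Longrightarrow> t \<in> T \<Longrightarrow> dist s t \<le> R"
    and R: "R > 0" and e: "0 < e" "e \<le> 1" and \<delta>: "norm \<delta> = 1"
    and lam: "R + 2 * R / sqrt e \<le> lam"
  shows "unlabeled_feasible S ((\<lambda>t. t + lam *\<^sub>R \<delta>) ` T)"
proof -
  obtain ss where ss: "distinct ss" "set ss = S"
    and ss_ord: "\<And>i j. i \<le> j \<Longrightarrow> j < length ss \<Longrightarrow> - inner (ss ! i) \<delta> \<le> - inner (ss ! j) \<delta>"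
    using sorted_list_of_finite_set_by_key[OF fin(1), of "\<lambda>x. - inner x \<delta>"] by blast
  obtain tt where tt: "distinct tt" "set tt = T"
    and tt_ord: "\<And>i j. i \<le> j \<Longrightarrow> j < length tt \<Longrightarrow> - inner (tt ! i) \<delta> \<le> - inner (tt ! j) \<delta>"
    using sorted_list_of_finite_set_by_key[OF fin(2), of "\<lambda>x. - inner x \<delta>"] by blast
  have len: "length tt = length ss" using card ss tt distinct_card by metis
  define tt' where "tt' = map (\<lambda>t. t + lam *\<^sub>R \<delta>) tt"
  have tt'_nth: "tt' ! i = tt ! i + lam *\<^sub>R \<delta>" if "i < length ss" for i
    unfolding tt'_def using that len by simp
  have gap: "norm (tt ! i - ss ! i) \<le> R" if "i < length ss" for i
    using close[of "ss ! i" "tt ! i"] that len ss(2) tt(2) by (auto simp: dist_norm norm_minus_commute)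
  have "unlabeled_feasible (set ss) (set tt')"
  proof (rule unlabeled_feasible_if_segments_clear)
    show "distinct ss" by (fact ss(1))
    show "distinct tt'" unfolding tt'_def using tt(1) by (simp add: distinct_map inj_on_def)
    show "length ss = length tt'" unfolding tt'_def using len by simp
  next
    fix i j and \<mu> :: real assume ij: "i < j" "j < length ss" and \<mu>: "0 \<le> \<mu>" "\<mu> \<le> 1"
    have "2 + e \<le> norm (ss ! j - ss ! i)"
      using sepS[of "ss ! j" "ss ! i"] ij ss by (auto simp: nth_eq_iff_index_eq dist_norm)
    moreover have "inner (ss ! j - ss ! i) \<delta> \<le> 0" using ss_ord[of i j] ij by (simp add: inner_diff_left)
    ultimately have "2 \<le> norm ((ss ! j - ss ! i) - \<mu> *\<^sub>R (lam *\<^sub>R \<delta> + (tt ! i - ss ! i)))"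
      using segment_far_from_point[OF \<delta> gap R e] lam \<mu> ij by simp
    thus "2 \<le> dist (ss ! j) (ss ! i + \<mu> *\<^sub>R (tt' ! i - ss ! i))"
      using tt'_nth[of i] tt'_nth[of j] ij by (simp add: dist_norm algebra_simps)
  next
    fix i j and \<mu> :: real assume ij: "j < i" "i < length ss" and \<mu>: "0 \<le> \<mu>" "\<mu> \<le> 1"
    \<comment> \<open>The same estimate, read from the target end of the segment with direction -\<delta>.\<close>
    have "2 + e \<le> norm (tt ! j - tt ! i)"
      using sepT[of "tt ! j" "tt ! i"] ij tt len by (auto simp: nth_eq_iff_index_eq dist_norm)
    moreover have "inner (tt ! j - tt ! i) (- \<delta>) \<le> 0" using tt_ord[of j i] ij len by (simp add: inner_diff_left)
    moreover have "norm (ss ! i - tt ! i) \<le> R" using gap ij by (simp add: norm_minus_commute)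
    ultimately have "2 \<le> norm ((tt ! j - tt ! i) - (1 - \<mu>) *\<^sub>R (lam *\<^sub>R (- \<delta>) + (ss ! i - tt ! i)))"
      using segment_far_from_point[of "- \<delta>" _ R e] \<delta> R e lam \<mu> by simp
    thus "2 \<le> dist (tt' ! j) (ss ! i + \<mu> *\<^sub>R (tt' ! i - ss ! i))"
      using tt'_nth[of i] tt'_nth[of j] ij by (simp add: dist_norm algebra_simps)
  qed
  thus ?thesis using ss tt unfolding tt'_def by simp
qed

theorem mainTheorem8:
  shows "\<exists>C>0. \<forall>(\<epsilon>::real) (S::pt set) (T::pt set) (n::nat) c.
    0 < \<epsilon> \<and> \<epsilon> \<le> 1 \<and> n \<ge> 2 \<and> finite S \<and> finite T \<and> card S = n \<and> card T = n \<and>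
    enc_center S c \<and> enc_center T c \<and>
    (\<forall>p\<in>S. \<forall>q\<in>S. p \<noteq> q \<longrightarrow> dist p q \<ge> 2 + \<epsilon>) \<and>
    (\<forall>p\<in>T. \<forall>q\<in>T. p \<noteq> q \<longrightarrow> dist p q \<ge> 2 + \<epsilon>)
    \<longrightarrow> (\<forall>\<delta>::pt. norm \<delta> = 1 \<longrightarrow>
          (\<exists>lam\<ge>0. let v = lam *\<^sub>R \<delta>; T' = (\<lambda>t. t + v) ` T in
             unlabeled_feasible S T' \<and>
             norm v \<le> C * (enc_radius S + enc_radius T) / sqrt \<epsilon> \<and>
             enc_radius (S \<union> T') \<le> C * (enc_radius S + enc_radius T) / sqrt \<epsilon>))"
proof (rule exI[of _ 4], intro conjI allI impI)
  fix e :: real and S T :: "pt set" and n :: nat and c \<delta> :: pt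
  assume "0 < e \<and> e \<le> 1 \<and> n \<ge> 2 \<and> finite S \<and> finite T \<and> card S = n \<and> card T = n \<and>
    enc_center S c \<and> enc_center T c \<and>
    (\<forall>p\<in>S. \<forall>q\<in>S. p \<noteq> q \<longrightarrow> dist p q \<ge> 2 + e) \<and>
    (\<forall>p\<in>T. \<forall>q\<in>T. p \<noteq> q \<longrightarrow> dist p q \<ge> 2 + e)"
  then have e: "0 < e" "e \<le> 1" and fin: "finite S" "finite T" and card: "card S = card T" "2 \<le> card S"
    and cS: "enc_center S c" and cT: "enc_center T c"
    and sepS: "\<And>p q. p \<in> S \<Longrightarrow> q \<in> S \<Longrightarrow> p \<noteq> q \<Longrightarrow> 2 + e \<le> dist p q"
    and sepT: "\<And>p q. p \<in> T \<Longrightarrow> q \<in> T \<Longrightarrow> p \<noteq> q \<Longrightarrow> 2 + e \<le> dist p q"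
    by auto
  assume \<delta>: "norm \<delta> = 1"
  define R where "R = enc_radius S + enc_radius T"
  define lam where "lam = R + 2 * R / sqrt e"
  obtain p q where pq: "p \<in> S" "q \<in> S" "p \<noteq> q"
    using card(2) by (metis obtain_subset_with_card_n card_2_iff insert_subset)
  obtain t where t: "t \<in> T" using card fin by fastforce
  have "2 + e \<le> 2 * enc_radius S" using sepS[OF pq] dist_le_enc_radius_add[OF cS cS pq(1,2)] by simp
  hence R: "0 < R" using enc_radius_nonneg[OF cT t] e unfolding R_def by linarith
  have "0 < 2 * R / sqrt e" "R \<le> R / sqrt e" "4 * R / sqrt e = 2 * (R / sqrt e) + 2 * R / sqrt e"
    using R e by (auto simp: le_divide_eq)
  hence lam: "0 \<le> lam" "lam \<le> 4 * R / sqrt e" "R + lam \<le> 4 * R / sqrt e"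
    using R unfolding lam_def by linarith+
  have "unlabeled_feasible S ((\<lambda>t. t + lam *\<^sub>R \<delta>) ` T)"
    using dist_le_enc_radius_add[OF cS cT] R e \<delta> unfolding R_def lam_def
    by (intro unlabeled_feasible_translate[OF fin card(1) sepS sepT]) auto
  moreover have "enc_radius (S \<union> (\<lambda>t. t + lam *\<^sub>R \<delta>) ` T) \<le> R + lam"
    using enc_radius_union_translate_le[OF cS cT pq(1) t, of "lam *\<^sub>R \<delta>"] \<delta> lam(1)
    unfolding R_def by simp
  ultimately show "\<exists>lam\<ge>0. let v = lam *\<^sub>R \<delta>; T' = (\<lambda>t. t + v) ` T in
      unlabeled_feasible S T' \<and> norm v \<le> 4 * (enc_radius S + enc_radius T) / sqrt e \<and>
      enc_radius (S \<union> T') \<le> 4 * (enc_radius S + enc_radius T) / sqrt e"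
    using lam \<delta> unfolding R_def Let_def by (intro exI[of _ lam]) auto
qed simp

end
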